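(* For any real numbers $t\ge1$ and $\varepsilon>0$, let $c=t-\lfloor t\rfloor$. There exists an indivisible-goods instance in which no allocation $A$ (i.e., no set of goods of size at most $\alpha$) gives every $t$-cohesive group an average satisfaction of at least $t-1+\frac{c(1-c)}{t}+\varepsilon$; that is, for every allocation some $t$-cohesive group has average satisfaction less than this value.
   Context: Model: There is a set of agents $N=\{1,\dots,n\}$. The resource consists of indivisible goods $G=\{g_1,\dots,g_m\}$ (no cake). Each agent $i$ approves a set $G_i\subseteq G$, and her utility for a set $A\subseteq G$ is $u_i(A)=|G_i\cap A|$. A parameter $\alpha\in(0,m]$ is given; an allocation is a set $A\subseteq G$ with $|A|\le\alpha$. For a real $t>0$, $N^*\subseteq N$ is $t$-cohesive if $|N^*|\ge t n/\alpha$ and $|\bigcap_{i\in N^*}G_i|\ge t$. The average satisfaction of a group $N'\subseteq N$ with respect to $A$ is $\frac1{|N'|}\sum_{i\in N'}u_i(A)$. *)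

theory Defs
  imports Complex_Main
begin

definition utility :: "(nat \<Rightarrow> nat set) \<Rightarrow> nat set \<Rightarrow> nat \<Rightarrow> nat" where
  "utility G A i = card (G i \<inter> A)"

definition is_instance :: "nat \<Rightarrow> nat \<Rightarrow> (nat \<Rightarrow> nat set) \<Rightarrow> real \<Rightarrow> bool" where
  "is_instance n m G \<alpha> \<longleftrightarrow> n \<ge> 1 \<and> (\<forall>i<n. G i \<subseteq> {0..<m}) \<and> 0 < \<alpha> \<and> \<alpha> \<le> real m"

definition is_allocation :: "nat \<Rightarrow> real \<Rightarrow> nat set \<Rightarrow> bool" where
  "is_allocation m \<alpha> A \<longleftrightarrow> A \<subseteq> {0..<m} \<and> real (card A) \<le> \<alpha>"

definition t_cohesive :: "nat \<Rightarrow> (nat \<Rightarrow> nat set) \<Rightarrow> real \<Rightarrow> real \<Rightarrow> nat set \<Rightarrow> bool" where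
  "t_cohesive n G \<alpha> t S \<longleftrightarrow> S \<subseteq> {0..<n} \<and> S \<noteq> {} \<and>
     real (card S) \<ge> t * real n / \<alpha> \<and> real (card (\<Inter>i\<in>S. G i)) \<ge> t"

definition avg_sat :: "(nat \<Rightarrow> nat set) \<Rightarrow> nat set \<Rightarrow> nat set \<Rightarrow> real" where
  "avg_sat G A S = (\<Sum>i\<in>S. real (utility G A i)) / real (card S)"

end

theory Submission
  imports Defs
begin

text \<open>
  Let \<open>t = k + c\<close> with \<open>k = \<lfloor>t\<rfloor>\<close> and put \<open>K = k + 1\<close>. There are \<open>K\<close> groups of \<open>K\<close> goods.
  The agents form \<open>P + N\<close> blocks of \<open>K\<close>: agents in the first \<open>P\<close> blocks approve every good,
  and in each of the other \<open>N\<close> blocks the agent with residue \<open>y\<close> approves everything except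
  group \<open>y\<close>. With \<open>\<alpha> < K\<close> an allocation has at most \<open>k\<close> goods and thus misses some group
  \<open>j\<close> entirely. All agents except the \<open>N\<close> who reject group \<open>j\<close> form a \<open>t\<close>-cohesive group:
  they share the \<open>K \<ge> t\<close> goods of group \<open>j\<close>, and \<open>\<alpha>\<close> is tuned so that their number is
  exactly \<open>t n / \<alpha>\<close>. But every allocated good is rejected by \<open>N\<close> of them, so their average
  satisfaction is at most \<open>k (n - 2N) / (n - N)\<close>, which tends to \<open>t - 1 + c (1 - c) / t\<close>
  as \<open>P / N \<rightarrow> c / (1 - c)\<close>.
\<close>

text \<open>Agent \<open>i\<close> sits in block \<open>i div K\<close> with residue \<open>i mod K\<close>; good \<open>g\<close> belongs to group \<open>g div K\<close>.\<close>

definition approvals :: "nat \<Rightarrow> nat \<Rightarrow> nat \<Rightarrow> nat set" where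
  "approvals K P i =
     (if i div K < P then {0..<K * K} else {g. g < K * K \<and> g div K \<noteq> i mod K})"

definition dissenters :: "nat \<Rightarrow> nat \<Rightarrow> nat \<Rightarrow> nat \<Rightarrow> nat set" where
  "dissenters K P N y = {i. P \<le> i div K \<and> i < K * (P + N) \<and> i mod K = y}"

lemma approvals_subset: "approvals K P i \<subseteq> {0..<K * K}"
  by (auto simp: approvals_def)

lemma dissenters_eq_image:
  assumes "y < K"
  shows "dissenters K P N y = (\<lambda>r. y + K * r) ` {P..<P + N}"
proof (intro set_eqI iffI)
  fix i assume "i \<in> dissenters K P N y"
  hence i: "P \<le> i div K" "i < K * (P + N)" "i mod K = y" by (auto simp: dissenters_def)
  have "i div K < P + N" using i(2) by (metis less_mult_imp_div_less mult.commute)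
  moreover have "i = y + K * (i div K)" using i(3) by (metis mod_mult_div_eq)
  ultimately show "i \<in> (\<lambda>r. y + K * r) ` {P..<P + N}" using i(1) by force
next
  fix i assume "i \<in> (\<lambda>r. y + K * r) ` {P..<P + N}"
  then obtain r where r: "P \<le> r" "r < P + N" "i = y + K * r" by auto
  have "K * Suc r \<le> K * (P + N)" using r(2) by (intro mult_le_mono2) simp
  thus "i \<in> dissenters K P N y" using r assms by (simp add: dissenters_def)
qed

lemma card_dissenters:
  assumes "y < K"
  shows "card (dissenters K P N y) = N"
proof -
  have "inj_on (\<lambda>r. y + K * r) {P..<P + N}" using assms by (auto simp: inj_on_def)
  thus ?thesis by (simp add: dissenters_eq_image[OF assms] card_image)
qed

lemma mem_approvals_iff_not_dissenter:
  assumes "i < K * (P + N)" "g < K * K"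
  shows "g \<in> approvals K P i \<longleftrightarrow> i \<notin> dissenters K P N (g div K)"
  using assms by (auto simp: approvals_def dissenters_def)

lemma card_Diff_dissenters:
  assumes "j < K"
  shows "card ({0..<K * (P + N)} - dissenters K P N j) = K * (P + N) - N"
proof -
  have "dissenters K P N j \<subseteq> {0..<K * (P + N)}" by (auto simp: dissenters_def)
  thus ?thesis by (simp add: card_Diff_subset finite_subset card_dissenters[OF assms])
qed

lemma group_subset_approvals:
  assumes "j < K" "i \<notin> dissenters K P N j" "i < K * (P + N)"
  shows "{j * K..<j * K + K} \<subseteq> approvals K P i"
proof
  fix g assume g: "g \<in> {j * K..<j * K + K}"
  have "g div K = j" using g by (intro div_nat_eqI) (auto simp: algebra_simps)
  moreover have "j * K + K \<le> K * K" using mult_le_mono1[of "Suc j" K K] assms(1) by simp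
  ultimately show "g \<in> approvals K P i" using g assms by (auto simp: approvals_def dissenters_def)
qed

lemma exists_group_avoiding:
  assumes "finite A" "card A < K"
  obtains j where "j < K" "j \<notin> (\<lambda>g. g div K) ` A"
proof -
  have "card ((\<lambda>g. g div K) ` A) < card {..<K}"
    using le_less_trans[OF card_image_le[OF assms(1)] assms(2)] by simp
  hence "\<not> {..<K} \<subseteq> (\<lambda>g. g div K) ` A"
    using card_mono[OF finite_imageI[OF assms(1)]] by (meson leD)
  thus thesis using that by blast
qed

lemma sum_card_Int_eq_sum_card_approvers:
  assumes "finite S" "finite A"
  shows "(\<Sum>i\<in>S. card (G i \<inter> A)) = (\<Sum>g\<in>A. card {i\<in>S. g \<in> G i})"
proof -
  have "card (G i \<inter> A) = (\<Sum>g\<in>A. if g \<in> G i then 1 else 0)" for i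
    using sum.inter_filter[OF assms(2), of "\<lambda>_. 1::nat" "\<lambda>g. g \<in> G i"]
    by (simp add: Int_commute Int_def)
  hence "(\<Sum>i\<in>S. card (G i \<inter> A)) = (\<Sum>i\<in>S. \<Sum>g\<in>A. if g \<in> G i then 1 else 0)" by simp
  also have "\<dots> = (\<Sum>g\<in>A. \<Sum>i\<in>S. if g \<in> G i then 1 else 0)" by (rule sum.swap)
  also have "\<dots> = (\<Sum>g\<in>A. card {i\<in>S. g \<in> G i})"
    using assms(1) by (simp add: sum.inter_filter[symmetric])
  finally show ?thesis .
qed

text \<open>Each allocated good lies outside group \<open>j\<close>, so it is rejected by exactly \<open>N\<close> members.\<close>
lemma avg_sat_without_dissenters:
  fixes K P N j :: nat
  defines "n \<equiv> K * (P + N)"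
  assumes "j < K" "A \<subseteq> {0..<K * K}" "j \<notin> (\<lambda>g. g div K) ` A"
  shows "avg_sat (approvals K P) A ({0..<n} - dissenters K P N j)
           = real (card A) * real (n - N - N) / real (n - N)"
proof -
  let ?S = "{0..<n} - dissenters K P N j"
  have sub: "dissenters K P N y \<subseteq> {0..<n}" for y by (auto simp: dissenters_def n_def)
  have fin: "finite (dissenters K P N y)" for y using sub finite_subset by blast
  have card_S: "card ?S = n - N" using card_Diff_dissenters[OF assms(2)] by (simp add: n_def)
  have approvers: "card {i \<in> ?S. g \<in> approvals K P i} = n - N - N" if "g \<in> A" for g
  proof -
    have g: "g < K * K" "g div K \<noteq> j" using that assms(3,4) by auto
    hence "g div K < K" by (simp add: less_mult_imp_div_less)
    have "{i \<in> ?S. g \<in> approvals K P i} = ?S - dissenters K P N (g div K)"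
      using mem_approvals_iff_not_dissenter[OF _ g(1)] by (auto simp: n_def)
    moreover have "dissenters K P N (g div K) \<subseteq> ?S" using sub g(2) by (auto simp: dissenters_def)
    ultimately show ?thesis
      using card_Diff_subset[OF fin] card_dissenters[OF \<open>g div K < K\<close>] card_S by simp
  qed
  have "finite A" using assms(3) finite_subset by blast
  hence "(\<Sum>i\<in>?S. card (approvals K P i \<inter> A)) = card A * (n - N - N)"
    using sum_card_Int_eq_sum_card_approvers[of ?S A] approvers by simp
  hence "(\<Sum>i\<in>?S. real (utility (approvals K P) A i)) = real (card A) * real (n - N - N)"
    unfolding utility_def by (simp flip: of_nat_sum)
  thus ?thesis unfolding avg_sat_def card_S by simp
qed

lemma hard_instance:
  fixes k P N :: nat and t :: real
  defines "K \<equiv> Suc k" and "n \<equiv> Suc k * (P + N)"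
  defines "\<alpha> \<equiv> t * real n / real (K * P + k * N)"
  assumes t_ge: "1 \<le> t" and t_le: "t \<le> K" and PN: "t * (real P + real N) < real K * P + real k * N"
  shows "is_instance n (K * K) (approvals K P) \<alpha> \<and>
           (\<forall>A. is_allocation (K * K) \<alpha> A \<longrightarrow>
              (\<exists>S. t_cohesive n (approvals K P) \<alpha> t S \<and>
                   avg_sat (approvals K P) A S
                     \<le> k * (real K * P + (real k - 1) * N) / (real K * P + real k * N)))"
proof -
  have n_minus_N: "n - N = K * P + k * N" by (simp add: n_def K_def algebra_simps)
  have PN_le: "real P + real N \<le> t * (real P + real N)" using t_ge by (simp add: mult_le_cancel_right1)
  hence pos: "0 < real K * P + real k * N" using PN by linarith
  hence "0 < K * P + k * N" by (metis of_nat_0_less_iff of_nat_add of_nat_mult)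
  hence "0 < n" using n_minus_N by linarith
  have "k \<noteq> 0"
  proof
    assume "k = 0"
    thus False using PN PN_le by (simp add: K_def)
  qed
  have n_minus_2N: "real (n - N - N) = real K * P + (real k - 1) * N"
    using \<open>k \<noteq> 0\<close> by (cases k) (auto simp: n_def K_def algebra_simps)
  have \<alpha>_pos: "0 < \<alpha>"
    unfolding \<alpha>_def using t_ge \<open>0 < n\<close> pos by (intro divide_pos_pos mult_pos_pos) auto
  have "t * real n = K * (t * (real P + real N))" by (simp add: n_def K_def algebra_simps)
  also have "\<dots> < K * (real K * P + real k * N)" using PN by (simp add: K_def)
  finally have \<alpha>_lt_K: "\<alpha> < K" using pos by (simp add: \<alpha>_def divide_less_eq mult.commute)
  have "real K \<le> real K * real K" by (simp add: K_def)
  hence "\<alpha> \<le> real (K * K)" using \<alpha>_lt_K by simp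
  hence inst: "is_instance n (K * K) (approvals K P) \<alpha>"
    using \<alpha>_pos \<open>0 < n\<close> approvals_subset unfolding is_instance_def by auto
  moreover have "\<exists>S. t_cohesive n (approvals K P) \<alpha> t S \<and>
                   avg_sat (approvals K P) A S \<le> k * (real K * P + (real k - 1) * N) / (real K * P + real k * N)"
    if "is_allocation (K * K) \<alpha> A" for A
  proof -
    have A: "A \<subseteq> {0..<K * K}" "real (card A) < K"
      using that \<alpha>_lt_K by (auto simp: is_allocation_def)
    hence "finite A" using finite_subset by blast
    obtain j where j: "j < K" "j \<notin> (\<lambda>g. g div K) ` A"
      using exists_group_avoiding[OF \<open>finite A\<close>] A(2) by auto
    define S where "S = {0..<n} - dissenters K P N j"
    have "card S = n - N"
      unfolding S_def n_def K_def[symmetric] by (rule card_Diff_dissenters[OF j(1)])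
    hence card_S: "card S = K * P + k * N" using n_minus_N by simp
    hence "S \<noteq> {}" using \<open>0 < K * P + k * N\<close> by auto
    have "{j * K..<j * K + K} \<subseteq> (\<Inter>i\<in>S. approvals K P i)"
      unfolding S_def n_def K_def[symmetric] by (intro INT_greatest group_subset_approvals[OF j(1)]) auto
    moreover obtain i0 where "i0 \<in> S" using \<open>S \<noteq> {}\<close> by blast
    hence "(\<Inter>i\<in>S. approvals K P i) \<subseteq> {0..<K * K}" using approvals_subset by blast
    hence "finite (\<Inter>i\<in>S. approvals K P i)" by (rule finite_subset) simp
    ultimately have "card {j * K..<j * K + K} \<le> card (\<Inter>i\<in>S. approvals K P i)"
      by (intro card_mono)
    hence "t \<le> card (\<Inter>i\<in>S. approvals K P i)" using t_le by simp
    moreover have "t * real n / \<alpha> = card S"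
      using t_ge \<open>0 < n\<close> pos card_S by (simp add: \<alpha>_def)
    ultimately have cohesive: "t_cohesive n (approvals K P) \<alpha> t S"
      using \<open>S \<noteq> {}\<close> unfolding t_cohesive_def S_def by auto
    have "avg_sat (approvals K P) A S = real (card A) * real (n - N - N) / real (n - N)"
      unfolding S_def n_def K_def[symmetric] by (rule avg_sat_without_dissenters[OF j(1) A(1) j(2)])
    also have "\<dots> \<le> k * real (n - N - N) / real (n - N)"
      using A(2) by (intro divide_right_mono mult_right_mono) (auto simp: K_def)
    also have "\<dots> = k * (real K * P + (real k - 1) * N) / (real K * P + real k * N)"
      using n_minus_N n_minus_2N by simp
    finally show ?thesis using cohesive by blast
  qed
  ultimately show ?thesis by blast
qed

lemma block_ratio_lt:
  fixes k P N :: nat and c \<epsilon> t :: real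
  defines "t \<equiv> k + c"
  assumes k: "1 \<le> k" and c: "0 \<le> c" "c < 1"
    and P_le: "(1 - c) * P \<le> c * N + (1 - c)" and N_large: "Suc k < N * \<epsilon>"
  shows "k * (real (Suc k) * P + (real k - 1) * N) / (real (Suc k) * P + real k * N)
           < t - 1 + c * (1 - c) / t + \<epsilon>"
proof -
  define K where "K = real (Suc k)"
  define D where "D = K * P + real k * N"
  have N_pos: "real N > 0" using N_large by (cases N) auto
  have t_pos: "t > 0" using k c by (simp add: t_def)
  have "real N \<le> k * N" using k N_pos by simp
  hence D_ge_N: "N \<le> D" by (simp add: D_def K_def add_increasing)
  hence D_pos: "D > 0" using N_pos by simp
  have lhs: "k * (K * P + (real k - 1) * N) / D = k - k * N / D"
    using D_pos by (simp add: D_def field_simps)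
  have rhs: "t - 1 + c * (1 - c) / t = k - k * (1 - c) / t"
    using t_pos by (simp add: t_def field_simps)
  have "(1 - c) * D = K * ((1 - c) * P) + (1 - c) * k * N" by (simp add: D_def algebra_simps)
  also have "\<dots> \<le> K * (c * N + (1 - c)) + (1 - c) * k * N"
    using P_le by (intro add_right_mono mult_left_mono) (auto simp: K_def)
  also have "\<dots> = N * t + K * (1 - c)" by (simp add: K_def t_def algebra_simps)
  finally have D_le: "(1 - c) * D \<le> N * t + K * (1 - c)" .
  have "k * (1 - c) / t - k * N / D = k * ((1 - c) * D - N * t) / (t * D)"
    using t_pos D_pos by (simp add: field_simps)
  also have "\<dots> \<le> k * (K * (1 - c)) / (t * D)"
    using D_le t_pos D_pos by (intro divide_right_mono mult_left_mono) auto
  also have "\<dots> \<le> t * K / (t * D)"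
    using t_pos D_pos c by (intro divide_right_mono mult_mono) (auto simp: K_def t_def)
  also have "\<dots> \<le> K / N" using t_pos D_ge_N N_pos by (simp add: K_def divide_left_mono)
  also have "\<dots> < \<epsilon>" using N_large N_pos by (simp add: K_def divide_less_eq mult.commute)
  finally have "k * (K * P + (real k - 1) * N) / D < t - 1 + c * (1 - c) / t + \<epsilon>"
    unfolding lhs rhs by linarith
  thus ?thesis by (simp only: K_def D_def)
qed

text \<open>The optimal ratio is \<open>P / N \<approx> c / (1 - c)\<close>; \<open>P\<close> is taken just above it.\<close>
lemma exists_block_counts:
  fixes k :: nat and c \<epsilon> t :: real
  defines "t \<equiv> k + c"
  assumes k: "1 \<le> k" and c: "0 \<le> c" "c < 1" and \<epsilon>: "0 < \<epsilon>"
  obtains P N :: nat where "t * (real P + real N) < real (Suc k) * P + real k * N"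
    and "k * (real (Suc k) * P + (real k - 1) * N) / (real (Suc k) * P + real k * N)
           < t - 1 + c * (1 - c) / t + \<epsilon>"
proof -
  define N where "N = nat \<lceil>Suc k / \<epsilon>\<rceil> + 1"
  define P where "P = nat \<lfloor>c * N / (1 - c)\<rfloor> + 1"
  have "Suc k / \<epsilon> < N" by (simp add: N_def) linarith
  hence N_large: "Suc k < N * \<epsilon>" using \<epsilon> by (simp add: divide_less_eq)
  have ratio_nonneg: "0 \<le> c * N / (1 - c)" using c by simp
  have "c * N / (1 - c) < P" using ratio_nonneg by (simp add: P_def) linarith
  hence P_gt: "c * N < (1 - c) * P" using c by (simp add: divide_less_eq mult.commute)
  have "P \<le> c * N / (1 - c) + 1" using ratio_nonneg by (simp add: P_def)
  hence "(1 - c) * P \<le> (1 - c) * (c * N / (1 - c) + 1)" using c by (intro mult_left_mono) auto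
  also have "\<dots> = c * N + (1 - c)" using c by (simp add: field_simps)
  finally have P_le: "(1 - c) * P \<le> c * N + (1 - c)" .
  have "t * (real P + real N) < real (Suc k) * P + real k * N" using P_gt by (simp add: t_def algebra_simps)
  with block_ratio_lt[OF k c P_le N_large] show thesis using that unfolding t_def by blast
qed

theorem mainTheorem20:
  fixes t \<epsilon> :: real
  assumes "t \<ge> 1" and "\<epsilon> > 0"
  shows "\<exists>n m G \<alpha>. is_instance n m G \<alpha> \<and>
           (\<forall>A. is_allocation m \<alpha> A \<longrightarrow>
              (\<exists>S. t_cohesive n G \<alpha> t S \<and>
                   avg_sat G A S < t - 1 + (t - of_int \<lfloor>t\<rfloor>) * (1 - (t - of_int \<lfloor>t\<rfloor>)) / t + \<epsilon>))"
proof -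
  define k where "k = nat \<lfloor>t\<rfloor>"
  define c where "c = t - of_int \<lfloor>t\<rfloor>"
  have "1 \<le> \<lfloor>t\<rfloor>" using assms(1) by simp
  hence k: "1 \<le> k" "real k = of_int \<lfloor>t\<rfloor>" by (auto simp: k_def le_nat_iff)
  have c: "0 \<le> c" "c < 1" by (simp_all add: c_def) linarith
  have t: "t = k + c" using k(2) by (simp add: c_def)
  obtain P N :: nat where PN: "t * (real P + real N) < real (Suc k) * P + real k * N"
    and ratio: "k * (real (Suc k) * P + (real k - 1) * N) / (real (Suc k) * P + real k * N)
                  < t - 1 + c * (1 - c) / t + \<epsilon>"
    using exists_block_counts[OF k(1) c assms(2)] unfolding t[symmetric] by blast
  have "t \<le> Suc k" using t c(2) by simp
  from hard_instance[OF assms(1) this PN] ratio show ?thesis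
    unfolding c_def[symmetric] by (meson le_less_trans)
qed

end
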